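(* Let $k=2$, $\Phi\equiv0$, $H$ convex, $f\ge0$, and $g=fH''\ge0$. Consider the cell-average update on a uniform mesh with zero-flux boundary conditions $$\bar u_j^{n+1}=\bar u_j^n+\mu h\,\{g(u_h^n)\}\widehat{\partial_xu_h^n}\Big|_{\partial I_j},\qquad j=1,\dots,N,$$ where $\mu=\Delta t/h^2$, $w|_{\partial I_j}:=w(x_{j+1/2})-w(x_{j-1/2})$, $\widehat{\partial_x u_h}=\beta_0\frac{[u_h]}{h}+\{\partial_xu_h\}+\beta_1h[\partial_x^2u_h]$ at interior interfaces, and the boundary terms at $x_{1/2}$ and $x_{N+1/2}$ are zero. Suppose $$\frac18<\beta_1<\frac14,\qquad \beta_0\ge1,$$ and $c_1\le c_2$ are constants with $u_h^n(x)\in[c_1,c_2]$ for all $x\in S_j=x_j+\frac h2\{-1,0,1\}$ and all $j=1,\dots,N$. If $$\mu\le\frac{1}{12\max_{j}|g_{j-1/2}|}\min\left\{\frac{1}{\beta_0+8\beta_1-2},\frac{1}{1-4\beta_1}\right\},$$ where $g_{j+1/2}=\{g(u_h^n)\}|_{x_{j+1/2}}$ for interior interfaces and $g_{1/2}=g_{N+1/2}=0$, then $\bar u_j^{n+1}\in[c_1,c_2]$ for all $j$.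
   Context: Uniform mesh of $\Omega=[a,b]$ with cells $I_j=(x_{j-1/2},x_{j+1/2})$ of length $h$, centers $x_j$; $u_h^n\in V_h=\{v: v|_{I_j}\in P^2(I_j)\}$, and $\bar u_j^n=\frac1h\int_{I_j}u_h^n\,dx$. At interior interfaces, $v^\pm$ are right/left limits, $[v]=v^+-v^-$, $\{v\}=(v^++v^-)/2$. The update is the cell-average equation of the forward Euler DG scheme for $\partial_tu=\partial_x(f(u)H''(u)\partial_xu)$ (i.e. the scheme with $\Phi=0$, $q_h=u_h$ and $f$ replaced by $fH''$). *)

theory Defs
  imports "HOL-Analysis.Analysis" "HOL-Computational_Algebra.Polynomial"
begin

text \<open>Uniform mesh of [a, a + N h]: cell I_j = (x_{j-1/2}, x_{j+1/2}), j = 1..N.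
  The interface point x_{j+1/2} is xif a h j = a + j h (j = 0..N).
  The DG solution u_h on cell j is the polynomial p j (degree at most 2).\<close>

definition xif :: "real \<Rightarrow> real \<Rightarrow> nat \<Rightarrow> real" where
  "xif a h j = a + real j * h"

definition xc :: "real \<Rightarrow> real \<Rightarrow> nat \<Rightarrow> real" where
  "xc a h j = a + (real j - 1/2) * h"

definition cell_avg :: "real \<Rightarrow> real \<Rightarrow> (nat \<Rightarrow> real poly) \<Rightarrow> nat \<Rightarrow> real" where
  "cell_avg a h p j = (1 / h) * integral {xif a h (j - 1) .. xif a h j} (\<lambda>x. poly (p j) x)"

definition g_if :: "(real \<Rightarrow> real) \<Rightarrow> real \<Rightarrow> real \<Rightarrow> nat \<Rightarrow> (nat \<Rightarrow> real poly) \<Rightarrow> nat \<Rightarrow> real" where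
  "g_if g a h N p j = (if 1 \<le> j \<and> j < N then
      (g (poly (p (Suc j)) (xif a h j)) + g (poly (p j) (xif a h j))) / 2 else 0)"

definition dflux :: "real \<Rightarrow> real \<Rightarrow> real \<Rightarrow> real \<Rightarrow> (nat \<Rightarrow> real poly) \<Rightarrow> nat \<Rightarrow> real" where
  "dflux \<beta>0 \<beta>1 a h p j =
     (let x = xif a h j; pr = p (Suc j); pl = p j in
       \<beta>0 * (poly pr x - poly pl x) / h
     + (poly (pderiv pr) x + poly (pderiv pl) x) / 2
     + \<beta>1 * h * (poly (pderiv (pderiv pr)) x - poly (pderiv (pderiv pl)) x))"

definition flux :: "(real \<Rightarrow> real) \<Rightarrow> real \<Rightarrow> real \<Rightarrow> real \<Rightarrow> real \<Rightarrow> nat \<Rightarrow> (nat \<Rightarrow> real poly) \<Rightarrow> nat \<Rightarrow> real" where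
  "flux g \<beta>0 \<beta>1 a h N p j =
     (if 1 \<le> j \<and> j < N then g_if g a h N p j * dflux \<beta>0 \<beta>1 a h p j else 0)"

definition avg_update :: "(real \<Rightarrow> real) \<Rightarrow> real \<Rightarrow> real \<Rightarrow> real \<Rightarrow> real \<Rightarrow> real \<Rightarrow> nat \<Rightarrow> (nat \<Rightarrow> real poly) \<Rightarrow> nat \<Rightarrow> real" where
  "avg_update g \<beta>0 \<beta>1 \<mu> a h N p j =
     cell_avg a h p j + \<mu> * h * (flux g \<beta>0 \<beta>1 a h N p j - flux g \<beta>0 \<beta>1 a h N p (j - 1))"

end

theory Submission
  imports Defs
begin

text \<open>By Simpson's rule the cell average of a quadratic is \<open>(u\<^sup>- + 4 u\<^sup>0 + u\<^sup>+) / 6\<close> in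
  its values at the three points of \<open>S\<^sub>j\<close>, and \<open>h\<close> times the numerical flux at an interface is
  a fixed linear combination of the six nodal values of the two adjacent cells. Hence the
  updated average is a combination of the nine nodal values of cells \<open>j - 1\<close>, \<open>j\<close>, \<open>j + 1\<close>
  with weights summing to one. The restrictions on \<open>\<beta>\<^sub>0, \<beta>\<^sub>1\<close> make the flux coefficients
  nonnegative, and the CFL condition keeps the weights of the cell's own values nonnegative,
  so the average stays in \<open>[c1, c2]\<close>.\<close>

definition nodal_value :: "real \<Rightarrow> real \<Rightarrow> (nat \<Rightarrow> real poly) \<Rightarrow> nat \<Rightarrow> real \<Rightarrow> real" where
  "nodal_value a h p j s = poly (p j) (xc a h j + s * h / 2)"

lemma quadratic_poly_eq:
  fixes q :: "'a::comm_ring_1 poly"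
  assumes "degree q \<le> 2"
  shows "q = [:coeff q 0, coeff q 1, coeff q 2:]"
proof (rule poly_eqI)
  fix n
  show "coeff q n = coeff [:coeff q 0, coeff q 1, coeff q 2:] n"
    using assms coeff_eq_0[of q n]
    by (auto simp: coeff_pCons numeral_2_eq_2 split: nat.split)
qed

lemma integral_quadratic_simpson:
  fixes q :: "real poly"
  assumes "degree q \<le> 2" and "l \<le> r"
  shows "integral {l..r} (poly q) = (r - l) / 6 * (poly q l + 4 * poly q ((l + r) / 2) + poly q r)"
proof -
  obtain c0 c1 c2 where q: "q = [:c0, c1, c2:]"
    using quadratic_poly_eq[OF assms(1)] by blast
  define F where "F x = c0 * x + c1 * x^2 / 2 + c2 * x^3 / 3" for x :: real
  have "(F has_real_derivative poly q x) (at x within {l..r})" for x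
    unfolding F_def q by (auto intro!: derivative_eq_intros simp: algebra_simps power2_eq_square)
  then have "(poly q has_integral F r - F l) {l..r}"
    using assms(2) by (intro fundamental_theorem_of_calculus)
      (auto simp: has_real_derivative_iff_has_vector_derivative)
  then have "integral {l..r} (poly q) = F r - F l"
    by (rule integral_unique)
  then show ?thesis
    unfolding F_def q
    by (simp add: field_simps power2_eq_square power3_eq_cube)
qed

lemma cell_avg_simpson:
  assumes "degree (p j) \<le> 2" and "h > 0" and "j \<ge> 1"
  shows "cell_avg a h p j =
    (nodal_value a h p j (-1) + 4 * nodal_value a h p j 0 + nodal_value a h p j 1) / 6"
proof -
  have "xif a h (j - 1) = xc a h j - h / 2" and "xif a h j = xc a h j + h / 2"
    using assms(3) by (auto simp: xif_def xc_def algebra_simps)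
  then show ?thesis
    using integral_quadratic_simpson[OF assms(1), of "xc a h j - h / 2" "xc a h j + h / 2"] assms(2)
    by (simp add: cell_avg_def nodal_value_def)
qed

lemma dflux_nodal_values:
  assumes "degree (p j) \<le> 2" and "degree (p (Suc j)) \<le> 2" and "h > 0"
  shows "h * dflux \<beta>0 \<beta>1 a h p j =
      (\<beta>0 - 3/2 + 4*\<beta>1) * nodal_value a h p (Suc j) (-1) + (2 - 8*\<beta>1) * nodal_value a h p (Suc j) 0
    + (4*\<beta>1 - 1/2) * nodal_value a h p (Suc j) 1
    - (4*\<beta>1 - 1/2) * nodal_value a h p j (-1) - (2 - 8*\<beta>1) * nodal_value a h p j 0
    - (\<beta>0 - 3/2 + 4*\<beta>1) * nodal_value a h p j 1"
proof -
  obtain l0 l1 l2 where l: "p j = [:l0, l1, l2:]"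
    using quadratic_poly_eq[OF assms(1)] by blast
  obtain r0 r1 r2 where r: "p (Suc j) = [:r0, r1, r2:]"
    using quadratic_poly_eq[OF assms(2)] by blast
  show ?thesis
    using assms(3)
    by (simp add: dflux_def nodal_value_def xif_def xc_def l r pderiv_pCons field_simps power2_eq_square)
qed

text \<open>The two identities below exhibit the left-hand side as a combination of the nine values
  with weights summing to one; the hypotheses on \<open>t\<close> make every weight nonnegative.\<close>
lemma stencil_update_mem_interval:
  fixes x y t A B C L M R L2 M2 R2 L0 M0 R0 c1 c2 :: real
  assumes "0 \<le> x" "x \<le> t" "0 \<le> y" "y \<le> t"
    and "0 \<le> A" "0 \<le> B" "0 \<le> C" "12 * t * (A + C) \<le> 1" "6 * t * B \<le> 1"
    and "L \<in> {c1..c2}" "M \<in> {c1..c2}" "R \<in> {c1..c2}"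
    and "L2 \<in> {c1..c2}" "M2 \<in> {c1..c2}" "R2 \<in> {c1..c2}"
    and "L0 \<in> {c1..c2}" "M0 \<in> {c1..c2}" "R0 \<in> {c1..c2}"
  shows "(L + 4*M + R) / 6 + x * (A*L2 + B*M2 + C*R2 - C*L - B*M - A*R)
           - y * (A*L + B*M + C*R - C*L0 - B*M0 - A*R0) \<in> {c1..c2}"
    (is "?e \<in> _")
proof -
  have "x*C + y*A \<le> t*C + t*A" and "x*A + y*C \<le> t*A + t*C" and "(x+y)*B \<le> (2*t)*B"
    using assms(1-7) by (intro add_mono mult_right_mono; simp)+
  then have wL: "0 \<le> 1/6 - x*C - y*A" and wR: "0 \<le> 1/6 - x*A - y*C" and wM: "0 \<le> 2/3 - B*(x+y)"
    using assms(5-9) by (simp_all add: algebra_simps)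
  have "?e - c1 = (1/6 - x*C - y*A)*(L-c1) + (2/3 - B*(x+y))*(M-c1) + (1/6 - x*A - y*C)*(R-c1)
     + x*(A*(L2-c1)+B*(M2-c1)+C*(R2-c1)) + y*(C*(L0-c1)+B*(M0-c1)+A*(R0-c1))"
    by (simp add: field_simps)
  moreover have "c2 - ?e = (1/6 - x*C - y*A)*(c2-L) + (2/3 - B*(x+y))*(c2-M) + (1/6 - x*A - y*C)*(c2-R)
     + x*(A*(c2-L2)+B*(c2-M2)+C*(c2-R2)) + y*(C*(c2-L0)+B*(c2-M0)+A*(c2-R0))"
    by (simp add: field_simps)
  ultimately have "0 \<le> ?e - c1" and "0 \<le> c2 - ?e"
    using wL wM wR assms by simp_all
  then show ?thesis by simp
qed

lemma g_if_nonneg: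
  assumes "\<And>u. g u \<ge> 0"
  shows "g_if g a h N p j \<ge> 0"
  using assms by (simp add: g_if_def)

lemma g_if_le_Max:
  assumes "N \<ge> 1"
  shows "g_if g a h N p i \<le> Max ((\<lambda>j. \<bar>g_if g a h N p (j - 1)\<bar>) ` {1..N})"
proof (cases "1 \<le> i \<and> i < N")
  case True
  then have "\<bar>g_if g a h N p i\<bar> \<in> (\<lambda>j. \<bar>g_if g a h N p (j - 1)\<bar>) ` {1..N}"
    by (intro image_eqI[where x = "Suc i"]) auto
  then show ?thesis by (meson Max_ge finite_imageI finite_atLeastAtMost abs_ge_self order_trans)
next
  case False
  then have "g_if g a h N p i = 0" by (auto simp: g_if_def)
  moreover have "\<bar>g_if g a h N p (1 - 1)\<bar> \<in> (\<lambda>j. \<bar>g_if g a h N p (j - 1)\<bar>) ` {1..N}"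
    using assms(1) by (intro imageI) simp
  ultimately show ?thesis by (metis Max_ge finite_imageI finite_atLeastAtMost abs_ge_zero order_trans)
qed

lemma flux_right_stencil:
  assumes deg: "\<And>i. i \<in> {1..N} \<Longrightarrow> degree (p i) \<le> 2" and "h > 0"
    and nodes: "\<And>i s. i \<in> {1..N} \<Longrightarrow> s \<in> {-1, 0, 1} \<Longrightarrow> nodal_value a h p i s \<in> {c1..c2}"
    and j: "j \<in> {1..N}"
  obtains L M R where "L \<in> {c1..c2}" "M \<in> {c1..c2}" "R \<in> {c1..c2}"
    and "h * flux g \<beta>0 \<beta>1 a h N p j = g_if g a h N p j *
      ((\<beta>0 - 3/2 + 4*\<beta>1) * L + (2 - 8*\<beta>1) * M + (4*\<beta>1 - 1/2) * R
       - (4*\<beta>1 - 1/2) * nodal_value a h p j (-1) - (2 - 8*\<beta>1) * nodal_value a h p j 0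
       - (\<beta>0 - 3/2 + 4*\<beta>1) * nodal_value a h p j 1)"
proof (cases "j < N")
  case True
  then have j': "Suc j \<in> {1..N}" by simp
  have "h * flux g \<beta>0 \<beta>1 a h N p j = g_if g a h N p j * (h * dflux \<beta>0 \<beta>1 a h p j)"
    using True j by (simp add: flux_def)
  also note dflux_nodal_values[OF deg[OF j] deg[OF j'] \<open>h > 0\<close>]
  finally show ?thesis
    by (rule that[of "nodal_value a h p (Suc j) (-1)" "nodal_value a h p (Suc j) 0"
          "nodal_value a h p (Suc j) 1", rotated 3]) (rule nodes[OF j'], simp)+
next
  case False
  then have "flux g \<beta>0 \<beta>1 a h N p j = 0" and "g_if g a h N p j = 0"
    by (auto simp: flux_def g_if_def)
  then show ?thesis
    using that[OF nodes[OF j] nodes[OF j] nodes[OF j], of 0 0 0] by simp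
qed

lemma flux_left_stencil:
  assumes deg: "\<And>i. i \<in> {1..N} \<Longrightarrow> degree (p i) \<le> 2" and "h > 0"
    and nodes: "\<And>i s. i \<in> {1..N} \<Longrightarrow> s \<in> {-1, 0, 1} \<Longrightarrow> nodal_value a h p i s \<in> {c1..c2}"
    and j: "j \<in> {1..N}"
  obtains L M R where "L \<in> {c1..c2}" "M \<in> {c1..c2}" "R \<in> {c1..c2}"
    and "h * flux g \<beta>0 \<beta>1 a h N p (j - 1) = g_if g a h N p (j - 1) *
      ((\<beta>0 - 3/2 + 4*\<beta>1) * nodal_value a h p j (-1) + (2 - 8*\<beta>1) * nodal_value a h p j 0
       + (4*\<beta>1 - 1/2) * nodal_value a h p j 1
       - (4*\<beta>1 - 1/2) * L - (2 - 8*\<beta>1) * M - (\<beta>0 - 3/2 + 4*\<beta>1) * R)"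
proof (cases "j \<ge> 2")
  case True
  then have j': "j - 1 \<in> {1..N}" and j'': "Suc (j - 1) = j" using j by auto
  have "h * flux g \<beta>0 \<beta>1 a h N p (j - 1) = g_if g a h N p (j - 1) * (h * dflux \<beta>0 \<beta>1 a h p (j - 1))"
    using True j by (simp add: flux_def Suc_le_eq)
  also note dflux_nodal_values[of p "j - 1", unfolded j'', OF deg[OF j'] deg[OF j] \<open>h > 0\<close>]
  finally show ?thesis
    by (rule that[of "nodal_value a h p (j - 1) (-1)" "nodal_value a h p (j - 1) 0"
          "nodal_value a h p (j - 1) 1", rotated 3]) (rule nodes[OF j'], simp)+
next
  case False
  then have "flux g \<beta>0 \<beta>1 a h N p (j - 1) = 0" and "g_if g a h N p (j - 1) = 0"
    by (auto simp: flux_def g_if_def)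
  then show ?thesis
    using that[OF nodes[OF j] nodes[OF j] nodes[OF j], of 0 0 0] by simp
qed

lemma avg_update_mem_interval:
  assumes "h > 0" and "\<mu> \<ge> 0"
    and deg: "\<And>i. i \<in> {1..N} \<Longrightarrow> degree (p i) \<le> 2"
    and nodes: "\<And>i s. i \<in> {1..N} \<Longrightarrow> s \<in> {-1, 0, 1} \<Longrightarrow> nodal_value a h p i s \<in> {c1..c2}"
    and "\<And>i. 0 \<le> g_if g a h N p i" and g_if_le: "\<And>i. g_if g a h N p i \<le> G"
    and "1/8 \<le> \<beta>1" "\<beta>1 \<le> 1/4" "3/2 \<le> \<beta>0 + 4*\<beta>1"
    and "12 * \<mu> * G * (\<beta>0 + 8*\<beta>1 - 2) \<le> 1" "12 * \<mu> * G * (1 - 4*\<beta>1) \<le> 1"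
    and j: "j \<in> {1..N}"
  shows "avg_update g \<beta>0 \<beta>1 \<mu> a h N p j \<in> {c1..c2}"
proof -
  have "1 \<le> j" using j by simp
  obtain L2 M2 R2 where right: "L2 \<in> {c1..c2}" "M2 \<in> {c1..c2}" "R2 \<in> {c1..c2}"
    and flux_right: "h * flux g \<beta>0 \<beta>1 a h N p j = g_if g a h N p j *
      ((\<beta>0 - 3/2 + 4*\<beta>1) * L2 + (2 - 8*\<beta>1) * M2 + (4*\<beta>1 - 1/2) * R2
       - (4*\<beta>1 - 1/2) * nodal_value a h p j (-1) - (2 - 8*\<beta>1) * nodal_value a h p j 0
       - (\<beta>0 - 3/2 + 4*\<beta>1) * nodal_value a h p j 1)"
    using flux_right_stencil[OF deg \<open>h > 0\<close> nodes j] by blast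
  obtain L0 M0 R0 where left: "L0 \<in> {c1..c2}" "M0 \<in> {c1..c2}" "R0 \<in> {c1..c2}"
    and flux_left: "h * flux g \<beta>0 \<beta>1 a h N p (j - 1) = g_if g a h N p (j - 1) *
      ((\<beta>0 - 3/2 + 4*\<beta>1) * nodal_value a h p j (-1) + (2 - 8*\<beta>1) * nodal_value a h p j 0
       + (4*\<beta>1 - 1/2) * nodal_value a h p j 1
       - (4*\<beta>1 - 1/2) * L0 - (2 - 8*\<beta>1) * M0 - (\<beta>0 - 3/2 + 4*\<beta>1) * R0)"
    using flux_left_stencil[OF deg \<open>h > 0\<close> nodes j] by blast
  have "avg_update g \<beta>0 \<beta>1 \<mu> a h N p j = cell_avg a h p j
      + \<mu> * (h * flux g \<beta>0 \<beta>1 a h N p j) - \<mu> * (h * flux g \<beta>0 \<beta>1 a h N p (j - 1))"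
    by (simp add: avg_update_def algebra_simps)
  also have "\<dots> \<in> {c1..c2}"
    unfolding cell_avg_simpson[of p j, OF deg[OF j] \<open>h > 0\<close> \<open>1 \<le> j\<close>]
      flux_right flux_left mult.assoc[symmetric]
  proof (rule stencil_update_mem_interval)
    show "\<mu> * g_if g a h N p j \<le> \<mu> * G" and "\<mu> * g_if g a h N p (j - 1) \<le> \<mu> * G"
      using g_if_le \<open>\<mu> \<ge> 0\<close> by (simp_all add: mult_left_mono)
  qed (use assms right left nodes[OF j] in \<open>auto simp: algebra_simps\<close>)
  finally show ?thesis .
qed

theorem theorem3p4:
  fixes f H H1 H2 g :: "real \<Rightarrow> real"
    and a h dt \<beta>0 \<beta>1 c1 c2 :: real and N :: nat
    and p :: "nat \<Rightarrow> real poly"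
  assumes h_pos: "h > 0" and N_pos: "N \<ge> 1" and dt_pos: "dt > 0"
    and H1: "\<And>u. (H has_real_derivative H1 u) (at u)"
    and H2: "\<And>u. (H1 has_real_derivative H2 u) (at u)"
    and H_convex: "convex_on UNIV H"
    and f_nonneg: "\<And>u. f u \<ge> 0"
    and g_def: "g = (\<lambda>u. f u * H2 u)"
    and g_nonneg: "\<And>u. g u \<ge> 0"
    and deg: "\<And>j. j \<in> {1..N} \<Longrightarrow> degree (p j) \<le> 2"
    and beta1: "1/8 < \<beta>1" "\<beta>1 < 1/4" and beta0: "\<beta>0 \<ge> 1"
    and c12: "c1 \<le> c2"
    and bounds: "\<And>j s. j \<in> {1..N} \<Longrightarrow> s \<in> {-1, 0, 1::real} \<Longrightarrow>
        poly (p j) (xc a h j + s * h / 2) \<in> {c1..c2}"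
    and cfl: "dt / h^2 * (12 * Max ((\<lambda>j. \<bar>g_if g a h N p (j - 1)\<bar>) ` {1..N}))
        \<le> min (1 / (\<beta>0 + 8 * \<beta>1 - 2)) (1 / (1 - 4 * \<beta>1))"
  shows "\<forall>j \<in> {1..N}. avg_update g \<beta>0 \<beta>1 (dt / h^2) a h N p j \<in> {c1..c2}"
proof
  txt \<open>\<open>c1 \<le> c2\<close> is implied by the nodal bounds.\<close>
  fix j assume j: "j \<in> {1..N}"
  define \<mu> where "\<mu> = dt / h^2"
  define G where "G = Max ((\<lambda>j. \<bar>g_if g a h N p (j - 1)\<bar>) ` {1..N})"
  have "\<mu> * (12 * G) \<le> 1 / (\<beta>0 + 8 * \<beta>1 - 2)" and "\<mu> * (12 * G) \<le> 1 / (1 - 4 * \<beta>1)"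
    using cfl by (simp_all add: \<mu>_def G_def)
  then have "12 * \<mu> * G * (\<beta>0 + 8*\<beta>1 - 2) \<le> 1" and "12 * \<mu> * G * (1 - 4*\<beta>1) \<le> 1"
    using beta0 beta1 by (simp_all add: pos_le_divide_eq mult_ac)
  moreover have "\<mu> \<ge> 0" using dt_pos by (simp add: \<mu>_def)
  moreover have "g_if g a h N p i \<le> G" for i
    unfolding G_def by (rule g_if_le_Max[OF N_pos])
  ultimately show "avg_update g \<beta>0 \<beta>1 (dt / h^2) a h N p j \<in> {c1..c2}"
    unfolding \<mu>_def[symmetric]
    using beta0 beta1 j
    by (intro avg_update_mem_interval[OF h_pos _ deg bounds[folded nodal_value_def]]
        g_if_nonneg g_nonneg) auto
qed

end
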